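(* The time evolution operators $\{T_\ell\}_{\ell\ge1}$ of the box-basket-ball system commute with each other: for all integers $k,\ell\ge1$ and every state $S$, $T_kT_\ell(S)=T_\ell T_k(S)$.
   Context: Box-basket-ball system. A site state is a triple $(d,e,f)$ of nonnegative integers with $d=e-f+1$ (one box, $e$ baskets, $f$ balls); $V=(1,0,0)$. A state is a sequence $(S_i)_{i\in\mathbb Z}$ of site states with $S_i=V$ for all but finitely many $i$. The map $R$ sends a carrier $(a,b,c)$ and a site $(d,e,f)$ to a site $(d',e',f')$ and a carrier $(a',b',c')$ with $d'=d+\min(a+b,a+c,b+f)-\min(e+c,d+c,d+b)$, $e'=e+\min(a+b,a+c,b+f)-\min(a+e,d+f,e+f)$, $f'=f+\min(e+c,d+c,d+b)-\min(a+e,d+f,e+f)$, $a'=a-\min(a+b,a+c,b+f)+\min(e+c,d+c,d+b)$, $b'=b-\min(a+b,a+c,b+f)+\min(a+e,d+f,e+f)$, $c'=c-\min(e+c,d+c,d+b)+\min(a+e,d+f,e+f)$. Time evolution $T_\ell$ (integer $\ell\ge1$): a carrier starting in state $u_\ell=(\ell,0,0)$ to the left of all non-vacuum sites passes the sites from left to right, each site being updated by $R$ (the carrier returns to $u_\ell$ after passing sufficiently many vacuum sites at the right); the new state consists of the updated sites. $R$ is the tropicalization of a whurl relation and satisfies the Yang–Baxter relation. *)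

theory Defs
  imports Main
begin

type_synonym triple = "int \<times> int \<times> int"

definition is_site :: "triple \<Rightarrow> bool" where
  "is_site s = (case s of (d, e, f) \<Rightarrow> d \<ge> 0 \<and> e \<ge> 0 \<and> f \<ge> 0 \<and> d = e - f + 1)"

definition vac :: triple where
  "vac = (1, 0, 0)"

definition is_state :: "(int \<Rightarrow> triple) \<Rightarrow> bool" where
  "is_state S = ((\<forall>i. is_site (S i)) \<and> finite {i. S i \<noteq> vac})"

text \<open>The combinatorial R: (carrier, site) maps to (new site, new carrier).\<close>
definition Rmap :: "triple \<Rightarrow> triple \<Rightarrow> triple \<times> triple" where
  "Rmap u s = (case u of (a, b, c) \<Rightarrow> case s of (d, e, f) \<Rightarrow>
     let X = min (min (a + b) (a + c)) (b + f);
         Y = min (min (e + c) (d + c)) (d + b);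
         Z = min (min (a + e) (d + f)) (e + f)
     in ((d + X - Y, e + X - Z, f + Y - Z),
         (a - X + Y, b - X + Z, c - Y + Z)))"

definition carrier0 :: "int \<Rightarrow> triple" where
  "carrier0 l = (l, 0, 0)"

fun carrier_at :: "int \<Rightarrow> (int \<Rightarrow> triple) \<Rightarrow> int \<Rightarrow> nat \<Rightarrow> triple" where
  "carrier_at l S N 0 = carrier0 l"
| "carrier_at l S N (Suc n) = snd (Rmap (carrier_at l S N n) (S (N + int n)))"

definition left_bound :: "(int \<Rightarrow> triple) \<Rightarrow> int" where
  "left_bound S = (SOME N. \<forall>i < N. S i = vac)"

text \<open>Time evolution T_l: the carrier, started in (l,0,0) to the left of all
  non-vacuum sites, passes the sites from left to right, updating each by R.
  (Sites left of the starting point are vacuum and are not changed, since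
  R maps (carrier0 l, vac) to (vac, carrier0 l).)\<close>
definition T :: "int \<Rightarrow> (int \<Rightarrow> triple) \<Rightarrow> (int \<Rightarrow> triple)" where
  "T l S = (let N = left_bound S in
     (\<lambda>i. if i < N then S i else fst (Rmap (carrier_at l S N (nat (i - N))) (S i))))"

end

theory Submission
  imports Defs
begin

(*
  The heart of the matter is the Yang-Baxter relation for the combinatorial
  map R: letting a k-carrier and an l-carrier pass a site one after the other
  gives the same site, and the same pair of carriers up to one further
  application of R, whichever carrier goes first.  R is piecewise linear, so
  this is proved by writing each application of R through the three minima
  it involves and checking four tropical identities by linear arithmetic with
  case splits (SMT); the remaining components follow from the conservation
  laws of R.

  The time evolution is then analysed for a carrier started at an arbitrary
  point M left of all non-vacuum sites.  The result does not depend on M,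
  because R lets carrier0 l pass a vacuum site unchanged.  Starting both
  evolutions at a common M, the carriers of T_k (T_l S) and T_l (T_k S) are
  related site by site through R: they start as (carrier0 k, carrier0 l),
  which R merely swaps, and the Yang-Baxter relation propagates this
  relation from each site to the next, equating the new sites on the way.
*)

text \<open>The minimum of three numbers, characterised by linear constraints and a
  disjunction; this is the form in which SMT handles the minima in R.\<close>

definition is_min3 :: "int \<Rightarrow> int \<Rightarrow> int \<Rightarrow> int \<Rightarrow> bool" where
  "is_min3 m p q r \<longleftrightarrow> m \<le> p \<and> m \<le> q \<and> m \<le> r \<and> (m = p \<or> m = q \<or> m = r)"

lemma Rmap_tropical:
  fixes a b c d e f :: int
  assumes "Rmap (a, b, c) (d, e, f) = (s', u')"
  obtains X Y Z where "is_min3 X (a + b) (a + c) (b + f)" "is_min3 Y (e + c) (d + c) (d + b)"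
    "is_min3 Z (a + e) (d + f) (e + f)"
    "s' = (d + X - Y, e + X - Z, f + Y - Z)" "u' = (a - X + Y, b - X + Z, c - Y + Z)"
  using assms
  by (intro that[of "min (min (a + b) (a + c)) (b + f)" "min (min (e + c) (d + c)) (d + b)"
        "min (min (a + e) (d + f)) (e + f)"]) (auto simp: is_min3_def Rmap_def Let_def min_def)

text \<open>The Yang-Baxter relation, read as the exchange of two carriers u and v at
  a site s.  It holds for arbitrary integer triples.\<close>

lemma Rmap_yang_baxter:
  assumes vs: "Rmap v s = (s1, v1)" and us1: "Rmap u s1 = (s2, u1)"
    and uv: "Rmap u v = (v', u')" and u's: "Rmap u' s = (s1', u1')"
    and v's1': "Rmap v' s1' = (s2', v1')"
  shows "s2' = s2" and "Rmap u1 v1 = (v1', u1')"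
proof -
  obtain a b c where u: "u = (a, b, c)" by (cases u) auto
  obtain d e f where v: "v = (d, e, f)" by (cases v) auto
  obtain g h i where s: "s = (g, h, i)" by (cases s) auto
  obtain Xa Ya Za where m1: "is_min3 Xa (d+e) (d+f) (e+i)" "is_min3 Ya (h+f) (g+f) (g+e)"
      "is_min3 Za (d+h) (g+i) (h+i)"
    and s1: "s1 = (g+Xa-Ya, h+Xa-Za, i+Ya-Za)" and v1: "v1 = (d-Xa+Ya, e-Xa+Za, f-Ya+Za)"
    using vs unfolding v s by (rule Rmap_tropical)
  obtain Xb Yb Zb where m2: "is_min3 Xb (a+b) (a+c) (b+(i+Ya-Za))"
      "is_min3 Yb ((h+Xa-Za)+c) ((g+Xa-Ya)+c) ((g+Xa-Ya)+b)"
      "is_min3 Zb (a+(h+Xa-Za)) ((g+Xa-Ya)+(i+Ya-Za)) ((h+Xa-Za)+(i+Ya-Za))"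
    and s2: "s2 = ((g+Xa-Ya)+Xb-Yb, (h+Xa-Za)+Xb-Zb, (i+Ya-Za)+Yb-Zb)"
    and u1: "u1 = (a-Xb+Yb, b-Xb+Zb, c-Yb+Zb)"
    using us1 unfolding u s1 by (rule Rmap_tropical)
  obtain Xc Yc Zc where m3: "is_min3 Xc (a+b) (a+c) (b+f)" "is_min3 Yc (e+c) (d+c) (d+b)"
      "is_min3 Zc (a+e) (d+f) (e+f)"
    and v': "v' = (d+Xc-Yc, e+Xc-Zc, f+Yc-Zc)" and u': "u' = (a-Xc+Yc, b-Xc+Zc, c-Yc+Zc)"
    using uv unfolding u v by (rule Rmap_tropical)
  obtain Xd Yd Zd where m4: "is_min3 Xd ((a-Xc+Yc)+(b-Xc+Zc)) ((a-Xc+Yc)+(c-Yc+Zc)) ((b-Xc+Zc)+i)"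
      "is_min3 Yd (h+(c-Yc+Zc)) (g+(c-Yc+Zc)) (g+(b-Xc+Zc))"
      "is_min3 Zd ((a-Xc+Yc)+h) (g+i) (h+i)"
    and s1': "s1' = (g+Xd-Yd, h+Xd-Zd, i+Yd-Zd)"
    and u1': "u1' = ((a-Xc+Yc)-Xd+Yd, (b-Xc+Zc)-Xd+Zd, (c-Yc+Zc)-Yd+Zd)"
    using u's unfolding u' s by (rule Rmap_tropical)
  obtain Xe Ye Ze where m5:
      "is_min3 Xe ((d+Xc-Yc)+(e+Xc-Zc)) ((d+Xc-Yc)+(f+Yc-Zc)) ((e+Xc-Zc)+(i+Yd-Zd))"
      "is_min3 Ye ((h+Xd-Zd)+(f+Yc-Zc)) ((g+Xd-Yd)+(f+Yc-Zc)) ((g+Xd-Yd)+(e+Xc-Zc))"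
      "is_min3 Ze ((d+Xc-Yc)+(h+Xd-Zd)) ((g+Xd-Yd)+(i+Yd-Zd)) ((h+Xd-Zd)+(i+Yd-Zd))"
    and s2': "s2' = ((g+Xd-Yd)+Xe-Ye, (h+Xd-Zd)+Xe-Ze, (i+Yd-Zd)+Ye-Ze)"
    and v1': "v1' = ((d+Xc-Yc)-Xe+Ye, (e+Xc-Zc)-Xe+Ze, (f+Yc-Zc)-Ye+Ze)"
    using v's1' unfolding v' s1' by (rule Rmap_tropical)
  obtain s6 w6 where R6: "Rmap u1 v1 = (s6, w6)" by (cases "Rmap u1 v1") auto
  obtain Xf Yf Zf where m6:
      "is_min3 Xf ((a-Xb+Yb)+(b-Xb+Zb)) ((a-Xb+Yb)+(c-Yb+Zb)) ((b-Xb+Zb)+(f-Ya+Za))"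
      "is_min3 Yf ((e-Xa+Za)+(c-Yb+Zb)) ((d-Xa+Ya)+(c-Yb+Zb)) ((d-Xa+Ya)+(b-Xb+Zb))"
      "is_min3 Zf ((a-Xb+Yb)+(e-Xa+Za)) ((d-Xa+Ya)+(f-Ya+Za)) ((e-Xa+Za)+(f-Ya+Za))"
    and s6: "s6 = ((d-Xa+Ya)+Xf-Yf, (e-Xa+Za)+Xf-Zf, (f-Ya+Za)+Yf-Zf)"
    and w6: "w6 = ((a-Xb+Yb)-Xf+Yf, (b-Xb+Zb)-Xf+Zf, (c-Yb+Zb)-Yf+Zf)"
    using R6 unfolding u1 v1 by (rule Rmap_tropical)
  text \<open>Second and third components of the new site, and of the new u-carrier.
    R preserves d - e + f on sites, a - b + c on carriers, and the sums a + d,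
    b + e, c + f of carrier and site; these linear laws give the rest.\<close>
  have "Xa - Za + Xb - Zb = Xd - Zd + Xe - Ze"
    using m1 m2 m3 m4 m5 unfolding is_min3_def by (smt (z3))
  moreover have "Ya - Za + Yb - Zb = Yd - Zd + Ye - Ze"
    using m1 m2 m3 m4 m5 unfolding is_min3_def by (smt (z3))
  moreover have "Zb - Xb + Zf - Xf = Zc - Xc + Zd - Xd"
    using m1 m2 m3 m4 m6 unfolding is_min3_def by (smt (z3))
  moreover have "Zb - Yb + Zf - Yf = Zc - Yc + Zd - Yd"
    using m1 m2 m3 m4 m6 unfolding is_min3_def by (smt (z3))
  ultimately show "s2' = s2" and "Rmap u1 v1 = (v1', u1')"
    unfolding s2 s2' R6 s6 w6 v1' u1' by auto
qed

lemma Rmap_carrier0_vac: "0 \<le> l \<Longrightarrow> Rmap (carrier0 l) vac = (vac, carrier0 l)"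
  by (simp add: Rmap_def carrier0_def vac_def Let_def)

lemma Rmap_carrier0_swap:
  "0 \<le> k \<Longrightarrow> 0 \<le> l \<Longrightarrow> Rmap (carrier0 k) (carrier0 l) = (carrier0 l, carrier0 k)"
  by (simp add: Rmap_def carrier0_def Let_def)

definition evolve_from :: "int \<Rightarrow> int \<Rightarrow> (int \<Rightarrow> triple) \<Rightarrow> (int \<Rightarrow> triple)" where
  "evolve_from l M S =
     (\<lambda>i. if i < M then S i else fst (Rmap (carrier_at l S M (nat (i - M))) (S i)))"

lemma T_eq_evolve_from: "T l S = evolve_from l (left_bound S) S"
  by (simp add: T_def evolve_from_def Let_def)

lemma carrier_passes_site:
  "Rmap (carrier_at l S M n) (S (M + int n)) =
     (evolve_from l M S (M + int n), carrier_at l S M (Suc n))"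
  by (simp add: evolve_from_def)

lemma carrier_at_vacuum:
  assumes "0 \<le> l" and "\<forall>i < M' + int m. S i = vac" and "n \<le> m"
  shows "carrier_at l S M' n = carrier0 l"
  using assms(3)
proof (induction n)
  case (Suc n)
  then have "S (M' + int n) = vac" using assms(2) by simp
  with Suc show ?case using Rmap_carrier0_vac[OF assms(1)] by simp
qed simp

lemma carrier_at_delay:
  assumes "0 \<le> l" and "\<forall>i < M' + int m. S i = vac"
  shows "carrier_at l S M' (m + n) = carrier_at l S (M' + int m) n"
proof (induction n)
  case 0
  show ?case using carrier_at_vacuum[OF assms] by simp
next
  case (Suc n)
  then show ?case by (simp add: add.assoc)
qed

lemma evolve_from_start:
  assumes "0 \<le> l" and vac: "\<forall>i < M. S i = vac" and "M' \<le> M"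
  shows "evolve_from l M' S = evolve_from l M S"
proof
  fix i
  define m where "m = nat (M - M')"
  have M: "M = M' + int m" using \<open>M' \<le> M\<close> by (simp add: m_def)
  have vac': "\<forall>i < M' + int m. S i = vac" using vac M by simp
  show "evolve_from l M' S i = evolve_from l M S i"
  proof (cases "i < M")
    case True
    then have "S i = vac" using vac by simp
    moreover have "carrier_at l S M' (nat (i - M')) = carrier0 l"
      using carrier_at_vacuum[OF assms(1) vac'] True M by simp
    ultimately show ?thesis using True Rmap_carrier0_vac[OF assms(1)]
      by (simp add: evolve_from_def)
  next
    case False
    then have "nat (i - M') = m + nat (i - M)" using M by simp
    then have "carrier_at l S M' (nat (i - M')) = carrier_at l S M (nat (i - M))"
      using carrier_at_delay[OF assms(1) vac'] M by simp
    then show ?thesis using False \<open>M' \<le> M\<close> by (simp add: evolve_from_def)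
  qed
qed

lemma carriers_exchange:
  assumes "0 \<le> k" and "0 \<le> l"
  shows "Rmap (carrier_at k (evolve_from l M S) M n) (carrier_at l S M n) =
           (carrier_at l (evolve_from k M S) M n, carrier_at k S M n)"
proof (induction n)
  case 0
  show ?case using Rmap_carrier0_swap[OF assms] by simp
next
  case (Suc n)
  show ?case
    by (rule Rmap_yang_baxter(2)[OF carrier_passes_site carrier_passes_site Suc.IH
          carrier_passes_site carrier_passes_site])
qed

lemma evolve_from_commute:
  assumes "0 \<le> k" and "0 \<le> l"
  shows "evolve_from k M (evolve_from l M S) = evolve_from l M (evolve_from k M S)"
proof
  fix i
  show "evolve_from k M (evolve_from l M S) i = evolve_from l M (evolve_from k M S) i"
  proof (cases "i < M")
    case True
    then show ?thesis by (simp add: evolve_from_def)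
  next
    case False
    then have i: "i = M + int (nat (i - M))" by simp
    show ?thesis
      by (subst (1 2) i, rule sym, rule Rmap_yang_baxter(1)[OF carrier_passes_site
          carrier_passes_site carriers_exchange[OF assms] carrier_passes_site carrier_passes_site])
  qed
qed

lemma left_bound_vacuum:
  assumes "\<exists>N. \<forall>i < N. S i = vac"
  shows "\<forall>i < left_bound S. S i = vac"
  unfolding left_bound_def by (rule someI_ex[OF assms])

lemma state_vacuum_prefix:
  assumes "is_state S"
  shows "\<exists>N. \<forall>i < N. S i = vac"
proof -
  have "finite {i. S i \<noteq> vac}" using assms by (simp add: is_state_def)
  then obtain B where "\<forall>i \<in> {i. S i \<noteq> vac}. B \<le> i"
    by (meson bdd_below_def bdd_below_finite)
  then have "\<forall>i < B. S i = vac" by force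
  then show ?thesis by blast
qed

lemma T_eq_evolve_from_below:
  assumes "0 \<le> l" and "\<exists>N. \<forall>i < N. S i = vac" and "M \<le> left_bound S"
  shows "T l S = evolve_from l M S"
  using evolve_from_start[OF assms(1) left_bound_vacuum[OF assms(2)] assms(3)]
  by (simp add: T_eq_evolve_from)

lemma T_vacuum_prefix:
  assumes "\<exists>N. \<forall>i < N. S i = vac"
  shows "\<exists>N. \<forall>i < N. T l S i = vac"
  using left_bound_vacuum[OF assms] by (auto simp: T_eq_evolve_from evolve_from_def)

theorem mainTheorem8:
  fixes k l :: int and S :: "int \<Rightarrow> triple"
  assumes "k \<ge> 1" and "l \<ge> 1" and "is_state S"
  shows "T k (T l S) = T l (T k S)"
proof -
  have k: "0 \<le> k" and l: "0 \<le> l" using assms(1,2) by simp_all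
  have S: "\<exists>N. \<forall>i < N. S i = vac" using state_vacuum_prefix[OF assms(3)] .
  have Tl: "\<exists>N. \<forall>i < N. T l S i = vac" and Tk: "\<exists>N. \<forall>i < N. T k S i = vac"
    using T_vacuum_prefix[OF S] by blast+
  define M where "M = min (left_bound S) (min (left_bound (T l S)) (left_bound (T k S)))"
  have lS: "T l S = evolve_from l M S"
    by (rule T_eq_evolve_from_below[OF l S]) (simp add: M_def)
  have kS: "T k S = evolve_from k M S"
    by (rule T_eq_evolve_from_below[OF k S]) (simp add: M_def)
  have klS: "T k (T l S) = evolve_from k M (T l S)"
    by (rule T_eq_evolve_from_below[OF k Tl]) (simp add: M_def)
  have lkS: "T l (T k S) = evolve_from l M (T k S)"
    by (rule T_eq_evolve_from_below[OF l Tk]) (simp add: M_def)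
  have "T k (T l S) = evolve_from k M (evolve_from l M S)" using klS lS by simp
  also have "\<dots> = evolve_from l M (evolve_from k M S)" by (rule evolve_from_commute[OF k l])
  also have "\<dots> = T l (T k S)" using lkS kS by simp
  finally show ?thesis .
qed

end
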